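(* Let $X$, $Z$ be topological vector spaces, $C\subseteq Z$ a nonempty closed convex cone with $C^-\neq\{0\}$, and $f:X\to\mathcal{F}(Z,C)$. If $f$ is upper lattice-semicontinuous at $x_0\in X$, then $f$ is lower continuous at $x_0$. If $\operatorname{Int}C\neq\emptyset$, then conversely lower continuity of $f$ at $x_0$ implies upper lattice-semicontinuity of $f$ at $x_0$.
   Context: $\mathcal{F}(Z,C)=\{A\subseteq Z\colon A=\operatorname{cl}(A+C)\}$ (empty set included); $C^-=\{z^*\in Z^*\colon z^*(z)\le0\ \forall z\in C\}$. $f$ is upper lattice-semicontinuous at $x_0$ iff $f(x_0)\subseteq\operatorname{cl}\bigcup_{U\in\mathcal{N}(x_0)}\bigcap_{x\in U}f(x)$ ($\mathcal{N}(x_0)$ the neighborhoods of $x_0$); equivalently, for every $z_0\in f(x_0)$ and every neighborhood $V$ of $z_0$ there exist $U\in\mathcal{N}(x_0)$ and $z\in V$ with $z\in f(x)$ for all $x\in U$. $f$ is lower continuous at $x_0$ iff for every $z_0\in f(x_0)$ and every neighborhood $V$ of $z_0$ there is a neighborhood $U$ of $x_0$ with $f(x)\cap V\neq\emptyset$ for all $x\in U$. *)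

theory Defs
  imports "HOL-Analysis.Analysis"
begin

class real_tvs = real_vector + topological_space +
  assumes tvs_continuous_add: "\<And>x y W. open W \<Longrightarrow> x + y \<in> W \<Longrightarrow>
      \<exists>U V. open U \<and> open V \<and> x \<in> U \<and> y \<in> V \<and> (\<forall>u\<in>U. \<forall>v\<in>V. u + v \<in> W)"
  assumes tvs_continuous_scaleR: "\<And>a x W. open W \<Longrightarrow> a *\<^sub>R x \<in> W \<Longrightarrow>
      \<exists>(A::real set) V. open A \<and> open V \<and> a \<in> A \<and> x \<in> V \<and> (\<forall>b\<in>A. \<forall>v\<in>V. b *\<^sub>R v \<in> W)"

definition is_nhd :: "'a::topological_space \<Rightarrow> 'a set \<Rightarrow> bool" where
  "is_nhd x U \<longleftrightarrow> (\<exists>V. open V \<and> x \<in> V \<and> V \<subseteq> U)"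

definition topdual :: "('z::real_tvs \<Rightarrow> real) set" where
  "topdual = {g. linear g \<and> continuous_on UNIV g}"

definition neg_dual_cone :: "'z::real_tvs set \<Rightarrow> ('z \<Rightarrow> real) set" where
  "neg_dual_cone C = {g \<in> topdual. \<forall>z\<in>C. g z \<le> 0}"

definition Fam :: "'z::real_tvs set \<Rightarrow> 'z set set" where
  "Fam C = {A. A = closure {a + c | a c. a \<in> A \<and> c \<in> C}}"

definition upper_lattice_semicontinuous_at ::
    "('x::topological_space \<Rightarrow> 'z::topological_space set) \<Rightarrow> 'x \<Rightarrow> bool" where
  "upper_lattice_semicontinuous_at f x0 \<longleftrightarrow>
     f x0 \<subseteq> closure (\<Union>U\<in>{U. is_nhd x0 U}. \<Inter>x\<in>U. f x)"

definition lower_continuous_at ::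
    "('x::topological_space \<Rightarrow> 'z::topological_space set) \<Rightarrow> 'x \<Rightarrow> bool" where
  "lower_continuous_at f x0 \<longleftrightarrow>
     (\<forall>z0\<in>f x0. \<forall>V. is_nhd z0 V \<longrightarrow>
        (\<exists>U. is_nhd x0 U \<and> (\<forall>x\<in>U. f x \<inter> V \<noteq> {})))"

end

theory Submission
  imports Defs
begin

text \<open>Upper lattice-semicontinuity trivially gives lower continuity: a point lying in f x for all x
  near x0 witnesses that f x meets the neighbourhood. For the converse, pick c in the interior of C
  and, inside a given neighbourhood of z0, the point z = z0 + t c with t > 0 small. Then z - v stays
  in the cone C for all v in a whole neighbourhood V of z0; lower continuity makes f x meet V for x
  near x0, and since each f x is stable under adding C, z lies in all these f x.\<close>

lemma upper_lattice_semicontinuous_imp_lower_continuous: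
  assumes "upper_lattice_semicontinuous_at f x0"
  shows "lower_continuous_at f x0"
  unfolding lower_continuous_at_def
proof (intro ballI allI impI)
  fix z0 V assume "z0 \<in> f x0" "is_nhd z0 V"
  then obtain V' where V': "open V'" "z0 \<in> V'" "V' \<subseteq> V" unfolding is_nhd_def by blast
  have "z0 \<in> closure (\<Union>U\<in>{U. is_nhd x0 U}. \<Inter>x\<in>U. f x)"
    using assms \<open>z0 \<in> f x0\<close> unfolding upper_lattice_semicontinuous_at_def by blast
  then have "(\<Union>U\<in>{U. is_nhd x0 U}. \<Inter>x\<in>U. f x) \<inter> V' \<noteq> {}"
    using V' unfolding closure_iff_nhds_not_empty by blast
  then show "\<exists>U. is_nhd x0 U \<and> (\<forall>x\<in>U. f x \<inter> V \<noteq> {})"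
    using V' by blast
qed

lemma Fam_add_mem:
  assumes "A \<in> Fam C" "a \<in> A" "c \<in> C"
  shows "a + c \<in> A"
proof -
  have "a + c \<in> {a + c | a c. a \<in> A \<and> c \<in> C}" using assms(2,3) by blast
  then have "a + c \<in> closure {a + c | a c. a \<in> A \<and> c \<in> C}"
    by (rule subsetD[OF closure_subset])
  also have "closure {a + c | a c. a \<in> A \<and> c \<in> C} = A"
    using assms(1) unfolding Fam_def by (simp only: mem_Collect_eq eq_commute)
  finally show ?thesis .
qed

lemma open_vimage_add:
  fixes a :: "'z::real_tvs"
  assumes "open W" shows "open ((\<lambda>v. a + v) -` W)"
  unfolding open_subopen[of "(\<lambda>v. a + v) -` W"]
proof
  fix v assume "v \<in> (\<lambda>v. a + v) -` W"
  then have "a + v \<in> W" by simp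
  from tvs_continuous_add[OF assms this] obtain U V where
    "open V" "v \<in> V" "\<forall>u\<in>U. \<forall>w\<in>V. u + w \<in> W" "a \<in> U" by blast
  then show "\<exists>T. open T \<and> v \<in> T \<and> T \<subseteq> (\<lambda>v. a + v) -` W" by (intro exI[of _ V]) auto
qed

lemma open_vimage_scaleR:
  fixes t :: real
  assumes "open (W::'z::real_tvs set)" shows "open ((\<lambda>v. t *\<^sub>R v) -` W)"
  unfolding open_subopen[of "(\<lambda>v. t *\<^sub>R v) -` W"]
proof
  fix v assume "v \<in> (\<lambda>v. t *\<^sub>R v) -` W"
  then have "t *\<^sub>R v \<in> W" by simp
  from tvs_continuous_scaleR[OF assms this] obtain A V where
    "open V" "v \<in> V" "\<forall>b\<in>A. \<forall>w\<in>V. b *\<^sub>R w \<in> W" "t \<in> A" by blast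
  then show "\<exists>T. open T \<and> v \<in> T \<and> T \<subseteq> (\<lambda>v. t *\<^sub>R v) -` W" by (intro exI[of _ V]) auto
qed

lemma open_imp_pos_scaleR_add_mem:
  fixes z0 c :: "'z::real_tvs"
  assumes "open W" "z0 \<in> W"
  obtains t :: real where "t > 0" "z0 + t *\<^sub>R c \<in> W"
proof -
  have "0 *\<^sub>R c \<in> (\<lambda>w. z0 + w) -` W" using assms(2) by simp
  with tvs_continuous_scaleR[OF open_vimage_add[OF assms(1)]] obtain B V
    where B: "open B" "(0::real) \<in> B" "c \<in> V" "\<forall>b\<in>B. \<forall>v\<in>V. z0 + b *\<^sub>R v \<in> W"
    by (metis vimage_eq)
  obtain e where "e > 0" "ball 0 e \<subseteq> B" using B(1,2) openE by blast
  then have "e / 2 > 0" "e / 2 \<in> B" by (auto simp: dist_real_def)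
  with B(3,4) that show ?thesis by blast
qed

lemma interior_cone_dominates_nhd:
  fixes C :: "'z::real_tvs set"
  assumes "cone C" "c \<in> interior C" "open W" "z0 \<in> W"
  shows "\<exists>z\<in>W. \<exists>V. open V \<and> z0 \<in> V \<and> (\<forall>v\<in>V. z - v \<in> C)"
proof -
  obtain t where t: "t > 0" and zW: "z0 + t *\<^sub>R c \<in> W"
    using open_imp_pos_scaleR_add_mem assms(3,4) by blast
  define z where "z = z0 + t *\<^sub>R c"
  \<comment> \<open>V is the set z - t (interior C), written as a preimage to get openness\<close>
  define V where
    "V = (\<lambda>v. (-1::real) *\<^sub>R v) -` ((\<lambda>w. z + w) -` ((\<lambda>u. (1/t) *\<^sub>R u) -` interior C))"
  have "open V" unfolding V_def
    by (intro open_vimage_add open_vimage_scaleR open_interior)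
  moreover have "z0 \<in> V" using assms(2) t unfolding V_def z_def by simp
  moreover have "z - v \<in> C" if "v \<in> V" for v
  proof -
    have "(1/t) *\<^sub>R (z - v) \<in> C" using that interior_subset unfolding V_def by auto
    then have "t *\<^sub>R ((1/t) *\<^sub>R (z - v)) \<in> C"
      using assms(1) t unfolding cone_def by (meson less_imp_le)
    then show ?thesis using t by simp
  qed
  ultimately show ?thesis using zW unfolding z_def by blast
qed

lemma lower_continuous_imp_upper_lattice_semicontinuous:
  fixes f :: "'x::topological_space \<Rightarrow> 'z::real_tvs set"
  assumes "cone C" "interior C \<noteq> {}" "\<forall>x. f x \<in> Fam C" "lower_continuous_at f x0"
  shows "upper_lattice_semicontinuous_at f x0"
  unfolding upper_lattice_semicontinuous_at_def
proof
  obtain c where c: "c \<in> interior C" using assms(2) by blast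
  fix z0 assume z0: "z0 \<in> f x0"
  show "z0 \<in> closure (\<Union>U\<in>{U. is_nhd x0 U}. \<Inter>x\<in>U. f x)"
    unfolding closure_iff_nhds_not_empty
  proof (intro allI impI)
    fix A W assume "W \<subseteq> A" "open W" "z0 \<in> W"
    obtain z V where z: "z \<in> W" and V: "open V" "z0 \<in> V" "\<forall>v\<in>V. z - v \<in> C"
      using interior_cone_dominates_nhd[OF assms(1) c \<open>open W\<close> \<open>z0 \<in> W\<close>] by blast
    then have "is_nhd z0 V" unfolding is_nhd_def by blast
    then obtain U where U: "is_nhd x0 U" "\<forall>x\<in>U. f x \<inter> V \<noteq> {}"
      using assms(4) z0 unfolding lower_continuous_at_def by blast
    have "z \<in> f x" if "x \<in> U" for x
    proof -
      have "f x \<inter> V \<noteq> {}" using U(2) that by simp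
      then obtain v where v: "v \<in> f x" "v \<in> V" by blast
      have "v + (z - v) \<in> f x" using V(3) v by (intro Fam_add_mem[OF spec[OF assms(3)]]) auto
      then show ?thesis by simp
    qed
    then show "(\<Union>U\<in>{U. is_nhd x0 U}. \<Inter>x\<in>U. f x) \<inter> A \<noteq> {}"
      using U(1) z \<open>W \<subseteq> A\<close> by blast
  qed
qed

theorem mainTheorem9:
  fixes f :: "'x::real_tvs \<Rightarrow> 'z::real_tvs set"
    and C :: "'z set" and x0 :: 'x
  assumes "C \<noteq> {}" and "closed C" and "convex C" and "cone C"
    and "neg_dual_cone C \<noteq> {\<lambda>_. 0}"
    and "\<forall>x. f x \<in> Fam C"
  shows "(upper_lattice_semicontinuous_at f x0 \<longrightarrow> lower_continuous_at f x0)
       \<and> (interior C \<noteq> {} \<longrightarrow>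
            (lower_continuous_at f x0 \<longrightarrow> upper_lattice_semicontinuous_at f x0))"
proof (intro conjI impI)
  show "lower_continuous_at f x0" if "upper_lattice_semicontinuous_at f x0"
    using that by (rule upper_lattice_semicontinuous_imp_lower_continuous)
  show "upper_lattice_semicontinuous_at f x0"
    if "interior C \<noteq> {}" "lower_continuous_at f x0"
    using \<open>cone C\<close> that(1) assms(6) that(2)
    by (rule lower_continuous_imp_upper_lattice_semicontinuous)
qed

end
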